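(* Consider the networked feedback system described in the context, under the input assumption stated there. Then for any integers $k_1\ge k_2\ge 0$, the random variable $\tau_{k_1}$ is independent of the channel inputs $u(k_1)$ and $u(k_2)$.
   Context: Setting: $P$ is a single-input single-output discrete-time linear time-invariant plant which is strictly proper (relative degree $\ge 1$), and $K$ is a proper SISO LTI controller. Let $\tau\ge0$ be an integer, $\mathcal D=\{0,\dots,\tau\}$, and $\{\tau_n\}$ an i.i.d. sequence with values in $\mathcal D$, $\Pr\{\tau_n=i\}=p_i$, $\sum_i p_i=1$ ($\tau_n$ is the delay of the datum sent at time $n$). With fixed real weights $\alpha_0,\dots,\alpha_\tau$ and Kronecker delta $\delta$, the channel maps its input $u$ to $u_d(k)=\sum_{i=0}^{\tau}\alpha_i\delta(\tau_{k-i}-i)u(k-i)$. The closed loop is: plant input $v(k)-u_d(k)$, plant output $y=P(v-u_d)$, controller output $u=Ky$; all signals are real and the system is at rest at $k=0$ (all signals vanish for $k<0$). Input assumption: $\{\tau_n\}$ is independent of $\{v(k)\}$, and $\{v(k)\}$ is a zero-mean white noise (independent values) with bounded variances $\sigma_v^2(k)$. *)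

theory Defs
  imports "HOL-Probability.Probability"
begin

text \<open>Causal SISO LTI system at rest (all signals vanish at negative times),
  given by its impulse response h: output at time k is the convolution
  sum over j from 0 to k of h j * w (k - j).\<close>
definition lti_out :: "(nat \<Rightarrow> real) \<Rightarrow> (nat \<Rightarrow> real) \<Rightarrow> nat \<Rightarrow> real" where
  "lti_out h w k = (\<Sum>j\<le>k. h j * w (k - j))"

text \<open>Proper = causal LTI (every impulse response above is causal);
  strictly proper (relative degree at least 1) = zero direct feedthrough.\<close>
definition strictly_proper :: "(nat \<Rightarrow> real) \<Rightarrow> bool" where
  "strictly_proper h \<longleftrightarrow> h 0 = 0"

text \<open>Channel output u_d(k) = sum_{i=0}^{tau} alpha_i delta(tau_{k-i} - i) u(k-i),
  terms with k - i < 0 vanish (system at rest).\<close>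
definition channel_out ::
  "nat \<Rightarrow> (nat \<Rightarrow> real) \<Rightarrow> (nat \<Rightarrow> nat) \<Rightarrow> (nat \<Rightarrow> real) \<Rightarrow> nat \<Rightarrow> real" where
  "channel_out tmax \<alpha> d u k =
     (\<Sum>i\<in>{i. i \<le> tmax \<and> i \<le> k}. \<alpha> i * (if d (k - i) = i then 1 else 0) * u (k - i))"

end

theory Submission
  imports Defs
begin

(* Since the plant is strictly proper, the loop contains a unit delay: by strong induction on k
   through controller, plant and channel, u k is a Borel function of the tau n and v n with n < k
   only.  Two independent families that are independent of each other form a single independent
   family, so tau k1 is independent of all tau n, v n with n < k1, and hence of (u k1, u k2) for
   k2 \<le> k1. *)

lemma lti_out_strictly_proper:
  assumes "strictly_proper h"
  shows "lti_out h w k = lti_out h (\<lambda>n. if n < k then w n else 0) k"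
  unfolding lti_out_def
proof (rule sum.cong [OF refl])
  fix j assume "j \<in> {..k}"
  then show "h j * w (k - j) = h j * (if k - j < k then w (k - j) else 0)"
    using assms by (cases "j = 0") (auto simp: strictly_proper_def)
qed

lemma borel_measurable_lti_out:
  assumes "\<And>n. n \<le> k \<Longrightarrow> w n \<in> borel_measurable N"
  shows "(\<lambda>\<omega>. lti_out h (\<lambda>n. w n \<omega>) k) \<in> borel_measurable N"
  unfolding lti_out_def using assms by measurable

lemma borel_measurable_lti_out_strictly_proper:
  assumes "strictly_proper h" and "\<And>n. n < k \<Longrightarrow> w n \<in> borel_measurable N"
  shows "(\<lambda>\<omega>. lti_out h (\<lambda>n. w n \<omega>) k) \<in> borel_measurable N"
proof -
  have "(\<lambda>\<omega>. lti_out h (\<lambda>n. if n < k then w n \<omega> else 0) k) \<in> borel_measurable N"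
  proof (rule borel_measurable_lti_out)
    fix n show "(\<lambda>\<omega>. if n < k then w n \<omega> else 0) \<in> borel_measurable N"
      using assms(2) by (cases "n < k") simp_all
  qed
  then show ?thesis
    by (subst lti_out_strictly_proper [OF assms(1)])
qed

lemma borel_measurable_channel_out:
  assumes "\<And>n. n \<le> k \<Longrightarrow> d n \<in> measurable N (count_space UNIV)"
    and "\<And>n. n \<le> k \<Longrightarrow> u n \<in> borel_measurable N"
  shows "(\<lambda>\<omega>. channel_out tmax \<alpha> (\<lambda>n. d n \<omega>) (\<lambda>n. u n \<omega>) k) \<in> borel_measurable N"
  unfolding channel_out_def using assms by measurable

lemma closed_loop_input_measurable:
  fixes N :: "'w measure"
  assumes sp: "strictly_proper hP"
    and plant: "\<And>\<omega> k. \<omega> \<in> space N \<Longrightarrow> y k \<omega> = lti_out hP (\<lambda>j. v j \<omega> - ud j \<omega>) k"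
    and ctrl: "\<And>\<omega> k. \<omega> \<in> space N \<Longrightarrow> u k \<omega> = lti_out hK (\<lambda>j. y j \<omega>) k"
    and chan: "\<And>\<omega> k. \<omega> \<in> space N \<Longrightarrow>
          ud k \<omega> = channel_out tmax \<alpha> (\<lambda>n. tau n \<omega>) (\<lambda>j. u j \<omega>) k"
    and tau: "\<And>n. n < k \<Longrightarrow> tau n \<in> measurable N (count_space UNIV)"
    and v: "\<And>n. n < k \<Longrightarrow> v n \<in> borel_measurable N"
  shows "u k \<in> borel_measurable N"
  using tau v
proof (induction k rule: less_induct)
  case (less k)
  have ud: "ud n \<in> borel_measurable N" if "n < k" for n
  proof (rule measurable_cong [THEN iffD2])
    show "(\<lambda>\<omega>. channel_out tmax \<alpha> (\<lambda>n. tau n \<omega>) (\<lambda>j. u j \<omega>) n) \<in> borel_measurable N"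
      using that less by (intro borel_measurable_channel_out) auto
  qed (rule chan)
  have y: "y m \<in> borel_measurable N" if "m \<le> k" for m
  proof (rule measurable_cong [THEN iffD2])
    show "(\<lambda>\<omega>. lti_out hP (\<lambda>j. v j \<omega> - ud j \<omega>) m) \<in> borel_measurable N"
      using that less.prems ud by (intro borel_measurable_lti_out_strictly_proper [OF sp]) auto
  qed (rule plant)
  show ?case
  proof (rule measurable_cong [THEN iffD2])
    show "(\<lambda>\<omega>. lti_out hK (\<lambda>j. y j \<omega>) k) \<in> borel_measurable N"
      using y by (rule borel_measurable_lti_out)
  qed (rule ctrl)
qed

lemma measurable_count_space_of_real:
  fixes f :: "'a \<Rightarrow> nat"
  assumes "(\<lambda>x. real (f x)) \<in> borel_measurable N"
  shows "f \<in> measurable N (count_space UNIV)"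
proof -
  have "(\<lambda>x. nat \<lfloor>real (f x)\<rfloor>) \<in> measurable N (count_space UNIV)"
    using assms by measurable
  then show ?thesis
    by simp
qed

lemma measurable_vimage_algebra_restrict:
  assumes "i \<in> K" and "\<And>\<omega> j. \<omega> \<in> \<Omega> \<Longrightarrow> j \<in> K \<Longrightarrow> X j \<omega> \<in> space (N j)"
  shows "X i \<in> measurable (vimage_algebra \<Omega> (\<lambda>\<omega>. restrict (\<lambda>j. X j \<omega>) K) (PiM K N)) (N i)"
proof -
  have "(\<lambda>\<omega>. restrict (\<lambda>j. X j \<omega>) K) \<in> measurable (vimage_algebra \<Omega> (\<lambda>\<omega>. restrict (\<lambda>j. X j \<omega>) K) (PiM K N)) (PiM K N)"
    using assms(2) by (intro measurable_vimage_algebra1) (auto simp: space_PiM)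
  from measurable_comp [OF this measurable_component_singleton [OF assms(1)]]
  show ?thesis
    using assms(1) by (simp add: comp_def)
qed

lemma (in prob_space) indep_vars_prob_Collect:
  assumes "indep_vars N X I" "finite J" "J \<subseteq> I" "\<And>j. j \<in> J \<Longrightarrow> B j \<in> sets (N j)"
  shows "prob {\<omega> \<in> space M. \<forall>j\<in>J. X j \<omega> \<in> B j} = (\<Prod>j\<in>J. prob (X j -` B j \<inter> space M))"
proof (cases "J = {}")
  case False
  then have "{\<omega> \<in> space M. \<forall>j\<in>J. X j \<omega> \<in> B j} = (\<Inter>j\<in>J. X j -` B j \<inter> space M)"
    by auto
  with indep_varsD [OF assms(1) False assms(2-4)] show ?thesis
    by simp
qed (simp add: prob_space)

lemma (in prob_space) indep_varsI_prob_Collect: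
  assumes rv: "\<And>i. i \<in> I \<Longrightarrow> random_variable (N i) (X i)"
    and prob: "\<And>J B. finite J \<Longrightarrow> J \<subseteq> I \<Longrightarrow> (\<And>j. j \<in> J \<Longrightarrow> B j \<in> sets (N j)) \<Longrightarrow>
      prob {\<omega> \<in> space M. \<forall>j\<in>J. X j \<omega> \<in> B j} = (\<Prod>j\<in>J. prob (X j -` B j \<inter> space M))"
  shows "indep_vars N X I"
  unfolding indep_vars_def2
proof (intro conjI ballI indep_setsI)
  show "{X i -` A \<inter> space M |A. A \<in> sets (N i)} \<subseteq> events" if "i \<in> I" for i
    using rv [OF that] by (auto dest: measurable_sets)
next
  fix J A assume J: "J \<noteq> {}" "J \<subseteq> I" "finite J"
    and "\<forall>j\<in>J. A j \<in> {X j -` B \<inter> space M |B. B \<in> sets (N j)}"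
  then obtain B where B: "\<And>j. j \<in> J \<Longrightarrow> B j \<in> sets (N j) \<and> A j = X j -` B j \<inter> space M"
    by simp metis
  then have "(\<Inter>j\<in>J. A j) = {\<omega> \<in> space M. \<forall>j\<in>J. X j \<omega> \<in> B j}"
    using J(1) by auto
  with prob [OF J(3,2)] B show "prob (\<Inter>j\<in>J. A j) = (\<Prod>j\<in>J. prob (A j))"
    by simp
qed (rule rv)

lemma Collect_Ball_eq_vimage_PiM:
  assumes "\<And>i. i \<in> I \<Longrightarrow> X i \<in> measurable M (N i)"
    and "finite F" "F \<subseteq> I" "\<And>i. i \<in> F \<Longrightarrow> A i \<in> sets (N i)"
  obtains C where "C \<in> sets (PiM I N)"
    and "(\<lambda>\<omega>. \<lambda>i\<in>I. X i \<omega>) -` C \<inter> space M = {\<omega> \<in> space M. \<forall>i\<in>F. X i \<omega> \<in> A i}"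
proof
  show "{x \<in> space (PiM I N). \<forall>i\<in>F. x i \<in> A i} \<in> sets (PiM I N)"
    using assms(2-4) by (measurable; auto)
  show "(\<lambda>\<omega>. \<lambda>i\<in>I. X i \<omega>) -` {x \<in> space (PiM I N). \<forall>i\<in>F. x i \<in> A i} \<inter> space M =
      {\<omega> \<in> space M. \<forall>i\<in>F. X i \<omega> \<in> A i}"
    using assms(1,3) by (auto simp: space_PiM intro: measurable_space)
qed

lemma (in prob_space) indep_vars_Sum:
  fixes X Y :: "'i \<Rightarrow> 'a \<Rightarrow> 'b"
  assumes X: "indep_vars N X I" and Y: "indep_vars N' Y J"
    and XY: "indep_var (PiM I N) (\<lambda>\<omega>. \<lambda>i\<in>I. X i \<omega>) (PiM J N') (\<lambda>\<omega>. \<lambda>j\<in>J. Y j \<omega>)"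
  shows "indep_vars (case_sum N N') (case_sum X Y) (Inl ` I \<union> Inr ` J)"
proof (rule indep_varsI_prob_Collect)
  show "random_variable (case_sum N N' k) (case_sum X Y k)" if "k \<in> Inl ` I \<union> Inr ` J" for k
    using that X Y by (auto simp: indep_vars_def)
next
  fix F and B :: "'i + 'i \<Rightarrow> 'b set"
  assume F: "finite F" "F \<subseteq> Inl ` I \<union> Inr ` J"
    and B: "\<And>k. k \<in> F \<Longrightarrow> B k \<in> sets (case_sum N N' k)"
  define Fl where "Fl = Inl -` F"
  define Fr where "Fr = Inr -` F"
  have Fl: "finite Fl" "Fl \<subseteq> I" "\<And>i. i \<in> Fl \<Longrightarrow> B (Inl i) \<in> sets (N i)"
    using F B [of "Inl _"] by (auto simp: Fl_def intro: finite_vimageI)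
  have Fr: "finite Fr" "Fr \<subseteq> J" "\<And>j. j \<in> Fr \<Longrightarrow> B (Inr j) \<in> sets (N' j)"
    using F B [of "Inr _"] by (auto simp: Fr_def intro: finite_vimageI)
  have F_eq: "F = Inl ` Fl \<union> Inr ` Fr"
    unfolding Fl_def Fr_def
    by (metis UNIV_sum image_vimage_eq inf_sup_distrib1 inf_top.right_neutral)
  have X_rv: "\<And>i. i \<in> I \<Longrightarrow> random_variable (N i) (X i)"
    and Y_rv: "\<And>j. j \<in> J \<Longrightarrow> random_variable (N' j) (Y j)"
    using X Y by (simp_all add: indep_vars_def)
  obtain Cl where Cl: "Cl \<in> sets (PiM I N)"
    "(\<lambda>\<omega>. \<lambda>i\<in>I. X i \<omega>) -` Cl \<inter> space M = {\<omega> \<in> space M. \<forall>i\<in>Fl. X i \<omega> \<in> B (Inl i)}"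
    by (rule Collect_Ball_eq_vimage_PiM [OF X_rv Fl])
  obtain Cr where Cr: "Cr \<in> sets (PiM J N')"
    "(\<lambda>\<omega>. \<lambda>j\<in>J. Y j \<omega>) -` Cr \<inter> space M = {\<omega> \<in> space M. \<forall>j\<in>Fr. Y j \<omega> \<in> B (Inr j)}"
    by (rule Collect_Ball_eq_vimage_PiM [OF Y_rv Fr])
  have "(\<lambda>\<omega>. (\<lambda>i\<in>I. X i \<omega>, \<lambda>j\<in>J. Y j \<omega>)) -` (Cl \<times> Cr) \<inter> space M =
      ((\<lambda>\<omega>. \<lambda>i\<in>I. X i \<omega>) -` Cl \<inter> space M) \<inter> ((\<lambda>\<omega>. \<lambda>j\<in>J. Y j \<omega>) -` Cr \<inter> space M)"
    by auto
  also have "\<dots> = {\<omega> \<in> space M. \<forall>k\<in>F. case_sum X Y k \<omega> \<in> B k}"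
    unfolding Cl(2) Cr(2) F_eq by (auto simp: ball_Un)
  finally have event: "(\<lambda>\<omega>. (\<lambda>i\<in>I. X i \<omega>, \<lambda>j\<in>J. Y j \<omega>)) -` (Cl \<times> Cr) \<inter> space M =
      {\<omega> \<in> space M. \<forall>k\<in>F. case_sum X Y k \<omega> \<in> B k}" .
  from indep_varD [OF XY Cl(1) Cr(1)]
  have "prob {\<omega> \<in> space M. \<forall>k\<in>F. case_sum X Y k \<omega> \<in> B k} =
      prob {\<omega> \<in> space M. \<forall>i\<in>Fl. X i \<omega> \<in> B (Inl i)} * prob {\<omega> \<in> space M. \<forall>j\<in>Fr. Y j \<omega> \<in> B (Inr j)}"
    by (simp only: event Cl(2) Cr(2))
  also have "\<dots> = (\<Prod>k\<in>F. prob (case_sum X Y k -` B k \<inter> space M))"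
    unfolding F_eq using Fl Fr
    by (subst prod.union_disjoint)
       (auto simp: indep_vars_prob_Collect [OF X] indep_vars_prob_Collect [OF Y] prod.reindex)
  finally show "prob {\<omega> \<in> space M. \<forall>k\<in>F. case_sum X Y k \<omega> \<in> B k} =
      (\<Prod>k\<in>F. prob (case_sum X Y k -` B k \<inter> space M))" .
qed

lemma (in prob_space) indep_set_vimage_algebra_measurable:
  assumes indep: "indep_var S X T Y"
    and f: "f \<in> measurable (vimage_algebra (space M) X S) F"
    and g: "g \<in> measurable (vimage_algebra (space M) Y T) G"
  shows "indep_set {f -` A \<inter> space M | A. A \<in> sets F} {g -` B \<inter> space M | B. B \<in> sets G}"
proof -
  have f_sets: "{f -` A \<inter> space M | A. A \<in> sets F} \<subseteq> sigma_sets (space M) {X -` A \<inter> space M | A. A \<in> sets S}"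
    using measurable_sets [OF f] by (auto simp: sets_vimage_algebra)
  have g_sets: "{g -` B \<inter> space M | B. B \<in> sets G} \<subseteq> sigma_sets (space M) {Y -` B \<inter> space M | B. B \<in> sets T}"
    using measurable_sets [OF g] by (auto simp: sets_vimage_algebra)
  from indep show ?thesis
    unfolding indep_var_eq indep_set_def
    by (elim conjE indep_sets_mono_sets) (use f_sets g_sets in \<open>auto split: bool.split\<close>)
qed

theorem lemma3:
  fixes M :: "'w measure"
    and tmax :: nat
    and p :: "nat \<Rightarrow> real"
    and \<alpha> :: "nat \<Rightarrow> real"
    and hP hK :: "nat \<Rightarrow> real"
    and tau :: "nat \<Rightarrow> 'w \<Rightarrow> nat"
    and v u y ud :: "nat \<Rightarrow> 'w \<Rightarrow> real"
    and k1 k2 :: nat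
  assumes M: "prob_space M"
    and sp: "strictly_proper hP"
    and tau_rv: "\<And>n. tau n \<in> measurable M (count_space UNIV)"
    and tau_range: "\<And>n \<omega>. \<omega> \<in> space M \<Longrightarrow> tau n \<omega> \<le> tmax"
    and tau_indep: "prob_space.indep_vars M (\<lambda>_. count_space UNIV) tau UNIV"
    and tau_dist: "\<And>n i. i \<le> tmax \<Longrightarrow> measure M {\<omega> \<in> space M. tau n \<omega> = i} = p i"
    and p_sum: "(\<Sum>i\<le>tmax. p i) = 1"
    and v_rv: "\<And>k. v k \<in> borel_measurable M"
    and v_white: "prob_space.indep_vars M (\<lambda>_. borel) v UNIV"
    and v_int: "\<And>k. integrable M (\<lambda>\<omega>. (v k \<omega>)\<^sup>2)"
    and v_mean: "\<And>k. prob_space.expectation M (v k) = 0"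
    and v_var_bdd: "\<exists>B. \<forall>k. prob_space.variance M (v k) \<le> B"
    and tau_v_indep: "prob_space.indep_var M
          (PiM UNIV (\<lambda>_. borel)) (\<lambda>\<omega> n. real (tau n \<omega>))
          (PiM UNIV (\<lambda>_. borel)) (\<lambda>\<omega> k. v k \<omega>)"
    and plant: "\<And>\<omega> k. \<omega> \<in> space M \<Longrightarrow>
          y k \<omega> = lti_out hP (\<lambda>j. v j \<omega> - ud j \<omega>) k"
    and ctrl: "\<And>\<omega> k. \<omega> \<in> space M \<Longrightarrow> u k \<omega> = lti_out hK (\<lambda>j. y j \<omega>) k"
    and chan: "\<And>\<omega> k. \<omega> \<in> space M \<Longrightarrow>
          ud k \<omega> = channel_out tmax \<alpha> (\<lambda>n. tau n \<omega>) (\<lambda>j. u j \<omega>) k"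
    and k12: "k2 \<le> k1"
  shows "prob_space.indep_set M
           {tau k1 -` A \<inter> space M | A. True}
           {(\<lambda>\<omega>. (u k1 \<omega>, u k2 \<omega>)) -` B \<inter> space M | B::(real \<times> real) set. B \<in> sets borel}"
proof -
  interpret prob_space M by (rule M)
  \<comment> \<open>The joint independence hypothesis is stated for the real-valued copies of the delays.\<close>
  define Z where "Z = case_sum (\<lambda>n \<omega>. real (tau n \<omega>)) v"
  have "indep_vars (\<lambda>_. borel) (\<lambda>n \<omega>. real (tau n \<omega>)) UNIV"
    using tau_indep by (rule indep_vars_compose2) simp
  from indep_vars_Sum [OF this v_white] tau_v_indep
  have Z_indep: "indep_vars (\<lambda>_. borel) Z UNIV"
    by (simp add: Z_def restrict_UNIV UNIV_sum [symmetric])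
  define K where "K = Inl ` {..<k1} \<union> Inr ` {..<k1}"
  from indep_var_restrict [OF Z_indep, of "{Inl k1}" K]
  have indep: "indep_var (PiM {Inl k1} (\<lambda>_. borel)) (\<lambda>\<omega>. restrict (\<lambda>i. Z i \<omega>) {Inl k1})
      (PiM K (\<lambda>_. borel)) (\<lambda>\<omega>. restrict (\<lambda>i. Z i \<omega>) K)"
    by (auto simp: K_def)
  let ?F = "vimage_algebra (space M) (\<lambda>\<omega>. restrict (\<lambda>i. Z i \<omega>) K) (PiM K (\<lambda>_. borel))"
  have Z_F: "Z i \<in> borel_measurable ?F" if "i \<in> K" for i
    using that by (rule measurable_vimage_algebra_restrict) simp
  have "u k \<in> borel_measurable ?F" if "k \<le> k1" for k
  proof (rule closed_loop_input_measurable [OF sp, where y = y and ud = ud])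
    fix n assume "n < k"
    then have "Inl n \<in> K" "Inr n \<in> K"
      using that by (auto simp: K_def)
    from this [THEN Z_F]
    show "tau n \<in> measurable ?F (count_space UNIV)" "v n \<in> borel_measurable ?F"
      by (auto simp: Z_def intro: measurable_count_space_of_real)
  qed (auto intro: plant ctrl chan)
  then have u_F: "(\<lambda>\<omega>. (u k1 \<omega>, u k2 \<omega>)) \<in> borel_measurable ?F"
    using k12 by (simp add: borel_prod [symmetric])
  have tau_F: "tau k1 \<in> measurable (vimage_algebra (space M) (\<lambda>\<omega>. restrict (\<lambda>i. Z i \<omega>) {Inl k1})
      (PiM {Inl k1} (\<lambda>_. borel))) (count_space UNIV)"
    using measurable_vimage_algebra_restrict [of "Inl k1" "{Inl k1}" "space M" Z "\<lambda>_. borel"]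
    by (auto simp: Z_def intro: measurable_count_space_of_real)
  from indep_set_vimage_algebra_measurable [OF indep tau_F u_F] show ?thesis
    by simp
qed

end
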